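(* Let $S$ be a supersymmetric numerical semigroup. Then the blowup semigroup of $S$ is symmetric.
   Context: $S$ is a numerical semigroup (a submonoid of $\mathbb N$ with finite complement) with minimal generators $e<a_1<\dots<a_t$. ${\rm ord}(n;S)$ is the maximum of $\sum c_i$ over $(c_0,\dots,c_t)\in\mathbb N^{t+1}$ with $c_0e+\sum c_ia_i=n$. $S$ is additive if ${\rm ord}(u+e;S)={\rm ord}(u;S)+1$ for all $u\in S$. With $\operatorname{Ap}(S;e)=\{w\in S:w-e\notin S\}=\{w_0<\dots<w_{e-1}\}$, $S$ is supersymmetric if $S$ is additive and, whenever $i+j=e-1$, both $w_i+w_j=w_{e-1}$ and ${\rm ord}(w_i;S)+{\rm ord}(w_j;S)={\rm ord}(w_{e-1};S)$ hold. The blowup is $B=\langle e,a_1-e,\dots,a_t-e\rangle$. A numerical semigroup $T$ with Frobenius number $F(T)$ (the largest integer not in $T$) is symmetric if, whenever $x+y=F(T)$ with $x,y\in\mathbb Z$, exactly one of $x,y$ is in $T$. *)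

theory Defs
  imports Main
begin

definition numerical_semigroup :: "nat set \<Rightarrow> bool" where
  "numerical_semigroup S \<longleftrightarrow> 0 \<in> S \<and> (\<forall>x\<in>S. \<forall>y\<in>S. x + y \<in> S) \<and> finite (UNIV - S)"

definition mingens :: "nat set \<Rightarrow> nat set" where
  "mingens S = {x \<in> S. x \<noteq> 0 \<and> \<not> (\<exists>y\<in>S. \<exists>z\<in>S. y \<noteq> 0 \<and> z \<noteq> 0 \<and> x = y + z)}"

text \<open>Multiplicity e: the smallest minimal generator (= smallest nonzero element).\<close>
definition mult :: "nat set \<Rightarrow> nat" where
  "mult S = Min (mingens S)"

definition ord_sg :: "nat \<Rightarrow> nat set \<Rightarrow> nat" where
  "ord_sg n S = Max {\<Sum>g\<in>mingens S. c g | c. (\<Sum>g\<in>mingens S. c g * g) = n}"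

definition additive :: "nat set \<Rightarrow> bool" where
  "additive S \<longleftrightarrow> (\<forall>u\<in>S. ord_sg (u + mult S) S = ord_sg u S + 1)"

definition apery :: "nat set \<Rightarrow> nat \<Rightarrow> nat set" where
  "apery S e = {w \<in> S. \<not> (e \<le> w \<and> w - e \<in> S)}"

text \<open>w_i: the i-th smallest element (0-based) of Ap(S;e).\<close>
definition apery_elt :: "nat set \<Rightarrow> nat \<Rightarrow> nat" where
  "apery_elt S i = sorted_list_of_set (apery S (mult S)) ! i"

definition supersymmetric :: "nat set \<Rightarrow> bool" where
  "supersymmetric S \<longleftrightarrow> additive S \<and>
     (\<forall>i j. i + j = mult S - 1 \<longrightarrow>
        apery_elt S i + apery_elt S j = apery_elt S (mult S - 1) \<and>
        ord_sg (apery_elt S i) S + ord_sg (apery_elt S j) S = ord_sg (apery_elt S (mult S - 1)) S)"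

inductive_set gen_monoid :: "nat set \<Rightarrow> nat set" for A where
  zero: "0 \<in> gen_monoid A"
| base: "a \<in> A \<Longrightarrow> a \<in> gen_monoid A"
| add: "x \<in> gen_monoid A \<Longrightarrow> y \<in> gen_monoid A \<Longrightarrow> x + y \<in> gen_monoid A"

definition blowup :: "nat set \<Rightarrow> nat set" where
  "blowup S = gen_monoid ({mult S} \<union> (\<lambda>a. a - mult S) ` (mingens S - {mult S}))"

definition frobenius :: "nat set \<Rightarrow> int" where
  "frobenius T = (if UNIV - T = {} then -1 else int (Max (UNIV - T)))"

definition int_mem :: "int \<Rightarrow> nat set \<Rightarrow> bool" where
  "int_mem x T \<longleftrightarrow> x \<ge> 0 \<and> nat x \<in> T"

definition symmetric_sg :: "nat set \<Rightarrow> bool" where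
  "symmetric_sg T \<longleftrightarrow> (\<forall>x y :: int. x + y = frobenius T \<longrightarrow> (int_mem x T \<longleftrightarrow> \<not> int_mem y T))"

end

theory Submission
  imports Defs
begin

(*
  An element b of the blowup B lifts to b + k e in S with k \<le> ord(b + k e), since every generator
  a - e of B comes from a generator a of S with order at least 1 and ord is superadditive.  If S is
  additive, ord grows by exactly one with each added e, so the least element of B congruent to an
  Apery element w of S is w - ord(w) e.  Supersymmetry makes these elements pair up to the common
  sum U = w_{e-1} - ord(w_{e-1}) e, and that is the Apery criterion for B to be symmetric with
  Frobenius number U - e.
*)

lemma mod_eq_less_imp_add_le:
  fixes a c e :: nat
  assumes "a mod e = c mod e" and "a < c"
  shows "a + e \<le> c"
proof -
  obtain s where s: "c = a + e * s"
    using mod_eq_nat1E[of c e a] assms by (metis less_imp_le)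
  with assms(2) show ?thesis by (cases s) auto
qed

lemma gen_monoid_mult: "x \<in> gen_monoid A \<Longrightarrow> k * x \<in> gen_monoid A"
  by (induction k) (auto intro: gen_monoid.intros)

lemma gen_monoid_sum: "finite I \<Longrightarrow> (\<And>i. i \<in> I \<Longrightarrow> f i \<in> gen_monoid A) \<Longrightarrow> sum f I \<in> gen_monoid A"
  by (induction I rule: finite_induct) (auto intro: gen_monoid.intros)

text \<open>By \<open>mem_iff\<close>, \<open>m r\<close> is the least element of \<open>T\<close> congruent to \<open>r\<close> modulo \<open>e\<close>,
  i.e.\ the Apery set of \<open>T\<close>; the classical criterion says \<open>T\<close> is symmetric when
  its Apery elements pair up to a common sum \<open>U\<close>.\<close>

locale complementary_apery =
  fixes T :: "nat set" and e U :: nat and m :: "nat \<Rightarrow> nat"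
  assumes e_pos: "0 < e"
    and zero_mem: "0 \<in> T"
    and add_mem: "\<And>x y. x \<in> T \<Longrightarrow> y \<in> T \<Longrightarrow> x + y \<in> T"
    and mem_iff: "\<And>n. n \<in> T \<longleftrightarrow> m (n mod e) \<le> n"
    and m_mod: "\<And>r. r < e \<Longrightarrow> m r mod e = r"
    and complementary: "\<And>r. r < e \<Longrightarrow> \<exists>r'<e. m r + m r' = U"
begin

lemma m_le: "r < e \<Longrightarrow> m r \<le> U"
  using complementary by fastforce

lemma m_attains: "\<exists>r<e. m r = U"
proof -
  have "m 0 = 0" using mem_iff[of 0] zero_mem by simp
  then show ?thesis using complementary[OF e_pos] by auto
qed

lemma U_ge: "e - 1 \<le> U"
  using m_mod[of "e - 1"] m_le[of "e - 1"] e_pos mod_less_eq_dividend[of "m (e - 1)" e] by simp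

lemma not_mem_imp_add_le: "n \<notin> T \<Longrightarrow> n + e \<le> U"
proof -
  assume "n \<notin> T"
  have "n mod e = m (n mod e) mod e" using m_mod[of "n mod e"] e_pos by simp
  moreover have "n < m (n mod e)" using \<open>n \<notin> T\<close> mem_iff by (meson not_le)
  ultimately have "n + e \<le> m (n mod e)" by (rule mod_eq_less_imp_add_le)
  with m_le[of "n mod e"] e_pos show ?thesis by simp
qed

lemma not_mem_U_minus_e: "e \<le> U \<Longrightarrow> U - e \<notin> T"
proof -
  assume "e \<le> U"
  obtain r where r: "r < e" "m r = U" using m_attains by blast
  then have "(U - e) mod e = r" using m_mod[OF r(1)] \<open>e \<le> U\<close> by (simp add: le_mod_geq)
  then show ?thesis using mem_iff[of "U - e"] r e_pos \<open>e \<le> U\<close> by simp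
qed

lemma frobenius_eq: "frobenius T = int U - int e"
proof (cases "UNIV - T = {}")
  case True
  then have "\<not> e \<le> U" using not_mem_U_minus_e by auto
  then show ?thesis using U_ge True unfolding frobenius_def by simp
next
  case False
  then obtain n where "n \<notin> T" by blast
  then have "e \<le> U" using not_mem_imp_add_le by fastforce
  have "Max (UNIV - T) = U - e"
  proof (rule Max_eqI)
    have "UNIV - T \<subseteq> {..U}" using not_mem_imp_add_le by fastforce
    then show "finite (UNIV - T)" by (rule finite_subset) simp
    show "U - e \<in> UNIV - T" using not_mem_U_minus_e[OF \<open>e \<le> U\<close>] by simp
  next
    fix y assume "y \<in> UNIV - T"
    then show "y \<le> U - e" using not_mem_imp_add_le[of y] by simp
  qed
  then show ?thesis using False \<open>e \<le> U\<close> unfolding frobenius_def by simp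
qed

lemma mem_if_complement_not_mem:
  assumes "a + b + e = U" and "a \<notin> T"
  shows "b \<in> T"
proof -
  define r where "r = a mod e"
  have "r < e" using e_pos unfolding r_def by simp
  have "a < m r" using assms(2) mem_iff unfolding r_def by (meson not_le)
  moreover have "m r mod e = a mod e" using m_mod[OF \<open>r < e\<close>] unfolding r_def by simp
  ultimately obtain s where s: "m r = a + e * s" "s \<noteq> 0"
    using mod_eq_nat1E[of "m r" e a] by (metis less_imp_le add_0_right less_not_refl mult_0_right)
  then obtain q where q: "m r = a + e * Suc q" using not0_implies_Suc by blast
  obtain r' where r': "r' < e" "m r + m r' = U" using complementary[OF \<open>r < e\<close>] by blast
  have b: "b = m r' + e * q" using assms(1) q r'(2) by simp
  then have "b mod e = r'" using m_mod[OF r'(1)] by simp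
  then show ?thesis using mem_iff[of b] b by simp
qed

theorem symmetric: "symmetric_sg T"
  unfolding symmetric_sg_def frobenius_eq
proof (intro allI impI)
  fix x y :: int
  assume xy: "x + y = int U - int e"
  show "int_mem x T \<longleftrightarrow> \<not> int_mem y T"
  proof
    assume x: "int_mem x T"
    show "\<not> int_mem y T"
    proof
      assume "int_mem y T"
      then have "nat x + nat y \<in> T"
        using x add_mem unfolding int_mem_def by blast
      moreover have "e \<le> U" "nat x + nat y = U - e"
        using x \<open>int_mem y T\<close> xy unfolding int_mem_def by auto
      ultimately show False using not_mem_U_minus_e by simp
    qed
  next
    assume y: "\<not> int_mem y T"
    show "int_mem x T"
    proof (cases "x < 0 \<or> y < 0")
      case True
      then show ?thesis
        using xy y not_mem_imp_add_le[of "nat x"] not_mem_imp_add_le[of "nat y"] U_ge e_pos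
        unfolding int_mem_def by fastforce
    next
      case False
      then have "nat x + nat y + e = U" using xy by auto
      then show ?thesis
        using mem_if_complement_not_mem[of "nat y" "nat x"] y False unfolding int_mem_def by (auto simp: add.commute)
    qed
  qed
qed

end

locale num_semigroup =
  fixes S :: "nat set"
  assumes numerical_semigroup: "numerical_semigroup S"
begin

abbreviation "M \<equiv> mingens S"
abbreviation "e \<equiv> mult S"

lemma zero_mem: "0 \<in> S" and add_mem: "x \<in> S \<Longrightarrow> y \<in> S \<Longrightarrow> x + y \<in> S"
  using numerical_semigroup by (simp_all add: numerical_semigroup_def)

lemma eventually_mem: "\<exists>N. \<forall>n\<ge>N. n \<in> S"
proof -
  have "finite (UNIV - S)" using numerical_semigroup by (simp add: numerical_semigroup_def)
  then obtain N where "\<forall>x\<in>UNIV - S. x < N" using finite_nat_set_iff_bounded by blast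
  then show ?thesis by (metis DiffI UNIV_I not_le)
qed

lemma mult_mem: "x \<in> S \<Longrightarrow> k * x \<in> S"
  by (induction k) (auto simp: zero_mem add_mem)

lemma mingens_subset: "M \<subseteq> S" and mingens_nonzero: "g \<in> M \<Longrightarrow> g \<noteq> 0"
  by (auto simp: mingens_def)

lemma finite_mingens: "finite M"
proof -
  obtain N where N: "\<forall>n\<ge>N. n \<in> S" using eventually_mem by blast
  have "Suc N \<in> S" using N by simp
  have "M \<subseteq> {..N + Suc N}"
  proof
    fix g assume g: "g \<in> M"
    show "g \<in> {..N + Suc N}"
    proof (cases "Suc N < g")
      case True
      have "g - Suc N \<notin> S"
      proof
        assume "g - Suc N \<in> S"
        moreover have "g = Suc N + (g - Suc N)" "g - Suc N \<noteq> 0" using True by simp_all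
        ultimately show False using g \<open>Suc N \<in> S\<close> unfolding mingens_def by blast
      qed
      then have "g - Suc N < N" using N not_le by blast
      then show ?thesis by simp
    qed simp
  qed
  then show ?thesis by (rule finite_subset) simp
qed

lemma least_nonzero_in_mingens: "(LEAST x. x \<in> S \<and> x \<noteq> 0) \<in> M" (is "?x \<in> M")
proof -
  obtain N where "\<forall>n\<ge>N. n \<in> S" using eventually_mem by blast
  then have "Suc N \<in> S \<and> Suc N \<noteq> 0" by simp
  then have x: "?x \<in> S" "?x \<noteq> 0" and least: "\<And>y. y \<in> S \<Longrightarrow> y \<noteq> 0 \<Longrightarrow> ?x \<le> y"
    using LeastI[of "\<lambda>x. x \<in> S \<and> x \<noteq> 0"] Least_le[of "\<lambda>x. x \<in> S \<and> x \<noteq> 0"] by auto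
  have "\<not> (\<exists>y\<in>S. \<exists>z\<in>S. y \<noteq> 0 \<and> z \<noteq> 0 \<and> ?x = y + z)"
    using least by fastforce
  then show ?thesis using x unfolding mingens_def by blast
qed

lemma mult_in_mingens: "e \<in> M"
  unfolding mult_def using least_nonzero_in_mingens by (intro Min_in finite_mingens) blast

lemma mult_le: "x \<in> S \<Longrightarrow> x \<noteq> 0 \<Longrightarrow> e \<le> x"
  unfolding mult_def
  using Min_le[OF finite_mingens least_nonzero_in_mingens] Least_le[of "\<lambda>x. x \<in> S \<and> x \<noteq> 0" x]
  by simp

lemma mult_pos: "0 < e" and mult_mem_S: "e \<in> S" and mult_le_mingens: "g \<in> M \<Longrightarrow> e \<le> g"
  using mult_in_mingens mingens_subset mingens_nonzero mult_le by auto


lemma ex_mingens_combination: "x \<in> S \<Longrightarrow> \<exists>c. (\<Sum>g\<in>M. c g * g) = x"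
proof (induction x rule: less_induct)
  case (less x)
  show ?case
  proof (cases "x \<in> M")
    case True
    have "(\<Sum>g\<in>M. (if g = x then 1 else 0) * g) = x"
      using finite_mingens True by (simp add: if_distrib[of "\<lambda>t. t * _"] cong: if_cong)
    then show ?thesis by (intro exI[of _ "\<lambda>g. if g = x then 1 else 0"])
  next
    case False
    show ?thesis
    proof (cases "x = 0")
      case True
      then show ?thesis by (intro exI[of _ "\<lambda>_. 0"]) simp
    next
      case False
      with \<open>x \<notin> M\<close> less.prems obtain y z where yz: "y \<in> S" "z \<in> S" "y \<noteq> 0" "z \<noteq> 0" "x = y + z"
        unfolding mingens_def by blast
      have "y < x" "z < x" using yz by simp_all
      then obtain c d where "(\<Sum>g\<in>M. c g * g) = y" "(\<Sum>g\<in>M. d g * g) = z"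
        using less.IH yz(1,2) by blast
      then have "(\<Sum>g\<in>M. (c g + d g) * g) = x"
        using yz by (simp add: distrib_right sum.distrib)
      then show ?thesis by (intro exI[of _ "\<lambda>g. c g + d g"])
    qed
  qed
qed

lemma finite_combination_lengths: "finite {\<Sum>g\<in>M. c g | c. (\<Sum>g\<in>M. c g * g) = n}"
proof (rule finite_subset)
  show "{\<Sum>g\<in>M. c g | c. (\<Sum>g\<in>M. c g * g) = n} \<subseteq> {..n}"
  proof
    fix s assume "s \<in> {\<Sum>g\<in>M. c g | c. (\<Sum>g\<in>M. c g * g) = n}"
    then obtain c where "s = (\<Sum>g\<in>M. c g)" "(\<Sum>g\<in>M. c g * g) = n" by blast
    moreover have "(\<Sum>g\<in>M. c g) \<le> (\<Sum>g\<in>M. c g * g)"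
      using mingens_nonzero by (intro sum_mono) (simp add: Suc_le_eq)
    ultimately show "s \<in> {..n}" by simp
  qed
qed simp

lemma ord_sg_ge: "(\<Sum>g\<in>M. c g * g) = n \<Longrightarrow> (\<Sum>g\<in>M. c g) \<le> ord_sg n S"
  unfolding ord_sg_def by (rule Max_ge[OF finite_combination_lengths]) blast

lemma ord_sg_attained: "n \<in> S \<Longrightarrow> \<exists>c. (\<Sum>g\<in>M. c g * g) = n \<and> (\<Sum>g\<in>M. c g) = ord_sg n S"
proof -
  assume "n \<in> S"
  then obtain c where "(\<Sum>g\<in>M. c g * g) = n" using ex_mingens_combination by blast
  then have "ord_sg n S \<in> {\<Sum>g\<in>M. c g | c. (\<Sum>g\<in>M. c g * g) = n}"
    unfolding ord_sg_def by (intro Max_in[OF finite_combination_lengths]) blast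
  then show ?thesis by auto
qed

lemma ord_sg_mult_le: "n \<in> S \<Longrightarrow> ord_sg n S * e \<le> n"
proof -
  assume "n \<in> S"
  then obtain c where c: "(\<Sum>g\<in>M. c g * g) = n" "(\<Sum>g\<in>M. c g) = ord_sg n S"
    using ord_sg_attained by blast
  have "(\<Sum>g\<in>M. c g) * e = (\<Sum>g\<in>M. c g * e)" by (simp add: sum_distrib_right)
  also have "\<dots> \<le> (\<Sum>g\<in>M. c g * g)" using mult_le_mingens by (intro sum_mono) simp
  finally show ?thesis using c by simp
qed

lemma ord_sg_superadditive: "x \<in> S \<Longrightarrow> y \<in> S \<Longrightarrow> ord_sg x S + ord_sg y S \<le> ord_sg (x + y) S"
proof -
  assume "x \<in> S" "y \<in> S"
  then obtain c d where "(\<Sum>g\<in>M. c g * g) = x" "(\<Sum>g\<in>M. c g) = ord_sg x S"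
    "(\<Sum>g\<in>M. d g * g) = y" "(\<Sum>g\<in>M. d g) = ord_sg y S"
    using ord_sg_attained by metis
  then show ?thesis
    using ord_sg_ge[of "\<lambda>g. c g + d g" "x + y"] by (simp add: distrib_right sum.distrib)
qed

lemma ord_sg_pos: "x \<in> S \<Longrightarrow> x \<noteq> 0 \<Longrightarrow> 0 < ord_sg x S"
proof (rule ccontr)
  assume "x \<in> S" "x \<noteq> 0" "\<not> 0 < ord_sg x S"
  then obtain c where "(\<Sum>g\<in>M. c g * g) = x" "(\<Sum>g\<in>M. c g) = 0"
    using ord_sg_attained by fastforce
  then show False using finite_mingens \<open>x \<noteq> 0\<close> by simp
qed

lemma ord_sg_add_mult:
  assumes "additive S" and "u \<in> S"
  shows "ord_sg (u + k * e) S = ord_sg u S + k"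
proof (induction k)
  case (Suc k)
  have "u + k * e \<in> S" using assms(2) add_mem mult_mem mult_mem_S by blast
  then have "ord_sg (u + k * e + e) S = ord_sg (u + k * e) S + 1"
    using assms(1) unfolding additive_def by blast
  moreover have "u + Suc k * e = u + k * e + e" by simp
  ultimately show ?case using Suc by (simp only:)
qed simp

abbreviation "Ap \<equiv> apery S e"

lemma apery_subset: "Ap \<subseteq> S"
  by (auto simp: apery_def)

lemma apery_decomp: "n \<in> S \<Longrightarrow> \<exists>w\<in>Ap. \<exists>k. n = w + k * e"
proof (induction n rule: less_induct)
  case (less n)
  show ?case
  proof (cases "e \<le> n \<and> n - e \<in> S")
    case True
    then obtain w k where "w \<in> Ap" "n - e = w + k * e"
      using less.IH[of "n - e"] mult_pos by auto
    then have "n = w + Suc k * e" using True by (simp only: mult_Suc) linarith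
    then show ?thesis using \<open>w \<in> Ap\<close> by blast
  next
    case False
    then have "n \<in> Ap" using less.prems by (simp add: apery_def)
    then show ?thesis by (intro bexI[of _ n] exI[of _ 0]) auto
  qed
qed

lemma apery_mod_inj: "inj_on (\<lambda>w. w mod e) Ap"
proof -
  have "w = w'" if w: "w \<in> Ap" and w': "w' \<in> Ap" and "w mod e = w' mod e" "w \<le> w'" for w w'
  proof (rule ccontr)
    assume "w \<noteq> w'"
    obtain k where k: "w' = w + e * k" using mod_eq_nat2E \<open>w mod e = w' mod e\<close> \<open>w \<le> w'\<close> by blast
    with \<open>w \<noteq> w'\<close> obtain j where "k = Suc j" using not0_implies_Suc by fastforce
    then have "e \<le> w'" "w' - e = w + j * e" using k by simp_all
    moreover have "w + j * e \<in> S" using w apery_subset add_mem mult_mem mult_mem_S by blast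
    ultimately show False using w' by (simp add: apery_def)
  qed
  then show ?thesis unfolding inj_on_def by (metis nat_le_linear)
qed

lemma apery_mod_surj: "r < e \<Longrightarrow> \<exists>w\<in>Ap. w mod e = r"
proof -
  assume "r < e"
  obtain N where "\<forall>n\<ge>N. n \<in> S" using eventually_mem by blast
  moreover have "N \<le> r + N * e" using mult_pos by (simp add: trans_le_add2)
  ultimately obtain w k where w: "w \<in> Ap" "r + N * e = w + k * e" using apery_decomp by blast
  then have "w mod e = (r + N * e) mod e" by simp
  then show ?thesis using w(1) \<open>r < e\<close> by auto
qed

lemma bij_betw_apery_mod: "bij_betw (\<lambda>w. w mod e) Ap {..<e}"
  unfolding bij_betw_def using apery_mod_inj apery_mod_surj mult_pos by fastforce

lemma finite_apery: "finite Ap" and card_apery: "card Ap = e"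
  using bij_betw_finite[OF bij_betw_apery_mod] bij_betw_same_card[OF bij_betw_apery_mod] by auto

definition apery_rep :: "nat \<Rightarrow> nat" where
  "apery_rep = the_inv_into Ap (\<lambda>w. w mod e)"

lemma apery_rep_mem: "r < e \<Longrightarrow> apery_rep r \<in> Ap"
  unfolding apery_rep_def using bij_betw_apery_mod
  by (metis bij_betwE bij_betw_the_inv_into lessThan_iff)

lemma apery_rep_mod: "r < e \<Longrightarrow> apery_rep r mod e = r"
  unfolding apery_rep_def by (intro f_the_inv_into_f_bij_betw[OF bij_betw_apery_mod]) simp

lemma apery_rep_of_mod: "w \<in> Ap \<Longrightarrow> apery_rep (w mod e) = w"
  unfolding apery_rep_def by (rule the_inv_into_f_f[OF apery_mod_inj])

lemma apery_elt_mem: "i < e \<Longrightarrow> apery_elt S i \<in> Ap"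
  unfolding apery_elt_def using finite_apery card_apery
  by (metis distinct_card length_sorted_list_of_set nth_mem set_sorted_list_of_set sorted_list_of_set(3))

lemma ex_apery_elt: "w \<in> Ap \<Longrightarrow> \<exists>i<e. apery_elt S i = w"
  unfolding apery_elt_def using finite_apery card_apery
  by (metis in_set_conv_nth length_sorted_list_of_set set_sorted_list_of_set)

abbreviation "B \<equiv> blowup S"

definition ord_reduced :: "nat \<Rightarrow> nat" where
  "ord_reduced w = w - ord_sg w S * e"

lemma ord_reduced_add: "w \<in> S \<Longrightarrow> ord_reduced w + ord_sg w S * e = w"
  unfolding ord_reduced_def using ord_sg_mult_le by simp

lemma ord_reduced_mod: "w \<in> S \<Longrightarrow> ord_reduced w mod e = w mod e"
  using arg_cong[OF ord_reduced_add, of w "\<lambda>n. n mod e"] by simp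

lemma mult_mem_blowup: "e \<in> B"
  unfolding blowup_def by (rule gen_monoid.base) simp

lemma ord_reduced_mem_blowup: "w \<in> S \<Longrightarrow> ord_reduced w \<in> B"
proof -
  assume "w \<in> S"
  then obtain c where c: "(\<Sum>g\<in>M. c g * g) = w" "(\<Sum>g\<in>M. c g) = ord_sg w S"
    using ord_sg_attained by blast
  have "ord_reduced w = (\<Sum>g\<in>M. c g * g) - (\<Sum>g\<in>M. c g * e)"
    unfolding ord_reduced_def using c by (simp add: sum_distrib_right[symmetric])
  also have "\<dots> = (\<Sum>g\<in>M. c g * (g - e))"
    using mult_le_mingens by (simp add: sum_subtractf_nat[symmetric] diff_mult_distrib2)
  also have "\<dots> \<in> B"
    unfolding blowup_def
  proof (rule gen_monoid_sum[OF finite_mingens])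
    fix g assume "g \<in> M"
    show "c g * (g - e) \<in> gen_monoid ({e} \<union> (\<lambda>a. a - e) ` (M - {e}))"
    proof (cases "g = e")
      case False
      with \<open>g \<in> M\<close> have "g - e \<in> gen_monoid ({e} \<union> (\<lambda>a. a - e) ` (M - {e}))"
        by (intro gen_monoid.base) blast
      then show ?thesis by (rule gen_monoid_mult)
    qed (simp add: gen_monoid.zero)
  qed
  finally show ?thesis .
qed

lemma blowup_lift: "b \<in> B \<Longrightarrow> \<exists>k. b + k * e \<in> S \<and> k \<le> ord_sg (b + k * e) S"
  unfolding blowup_def
proof (induction b rule: gen_monoid.induct)
  case zero
  show ?case using zero_mem by (intro exI[of _ 0]) simp
next
  case (base a)
  show ?case
  proof (cases "a = e")
    case True
    then show ?thesis using mult_mem_S by (intro exI[of _ 0]) simp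
  next
    case False
    then obtain g where g: "g \<in> M" "a = g - e" using base by auto
    then have "a + 1 * e = g" using mult_le_mingens by simp
    moreover have "g \<in> S" "1 \<le> ord_sg g S"
      using g(1) mingens_subset mingens_nonzero ord_sg_pos by (auto simp: Suc_le_eq)
    ultimately show ?thesis by metis
  qed
next
  case (add x y)
  then obtain k l where kl: "x + k * e \<in> S" "k \<le> ord_sg (x + k * e) S"
    "y + l * e \<in> S" "l \<le> ord_sg (y + l * e) S" by blast
  have eq: "x + y + (k + l) * e = (x + k * e) + (y + l * e)" by (simp add: algebra_simps)
  have "x + y + (k + l) * e \<in> S" unfolding eq using kl(1,3) by (rule add_mem)
  moreover have "k + l \<le> ord_sg (x + y + (k + l) * e) S"
    unfolding eq using kl ord_sg_superadditive[OF kl(1,3)] by linarith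
  ultimately show ?case by blast
qed

lemma ord_reduced_apery_le_blowup:
  assumes "additive S" and "b \<in> B"
  shows "ord_reduced (apery_rep (b mod e)) \<le> b"
proof -
  obtain k where k: "b + k * e \<in> S" "k \<le> ord_sg (b + k * e) S" using blowup_lift[OF assms(2)] by blast
  then obtain w j where w: "w \<in> Ap" "b + k * e = w + j * e" using apery_decomp by blast
  have "w \<in> S" using w(1) apery_subset by blast
  have "k \<le> ord_sg w S + j" using k(2) unfolding w(2) ord_sg_add_mult[OF assms(1) \<open>w \<in> S\<close>] .
  then have "k * e \<le> (ord_sg w S + j) * e" by (rule mult_le_mono1)
  then have "k * e \<le> ord_sg w S * e + j * e" by (simp add: add_mult_distrib)
  then have "ord_reduced w \<le> b" using w(2) ord_reduced_add[OF \<open>w \<in> S\<close>] by linarith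
  moreover have "b mod e = w mod e" using arg_cong[OF w(2), of "\<lambda>n. n mod e"] by simp
  ultimately show ?thesis using apery_rep_of_mod[OF w(1)] by simp
qed

lemma mem_blowup_iff:
  assumes "additive S"
  shows "n \<in> B \<longleftrightarrow> ord_reduced (apery_rep (n mod e)) \<le> n"
proof
  assume "ord_reduced (apery_rep (n mod e)) \<le> n" (is "?u \<le> n")
  have w: "apery_rep (n mod e) \<in> S" using apery_rep_mem apery_subset mult_pos by auto
  then have "?u mod e = n mod e" using ord_reduced_mod apery_rep_mod mult_pos by simp
  then obtain k where "n = ?u + e * k" using mod_eq_nat2E \<open>?u \<le> n\<close> by blast
  moreover have "?u \<in> B" using ord_reduced_mem_blowup[OF w] .
  moreover have "e * k \<in> B" using gen_monoid_mult[OF mult_mem_blowup[unfolded blowup_def]]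
    unfolding blowup_def by (simp add: mult.commute)
  ultimately show "n \<in> B" unfolding blowup_def by (metis gen_monoid.add)
qed (rule ord_reduced_apery_le_blowup[OF assms])

lemma supersymmetric_ord_reduced_pairs:
  assumes "supersymmetric S" and "w \<in> Ap"
  shows "\<exists>w'\<in>Ap. ord_reduced w + ord_reduced w' = ord_reduced (apery_elt S (e - 1))"
proof -
  obtain i where i: "i < e" "apery_elt S i = w" using ex_apery_elt[OF assms(2)] by blast
  define w' where "w' = apery_elt S (e - 1 - i)"
  define W where "W = apery_elt S (e - 1)"
  have "w' \<in> Ap" "W \<in> Ap" using apery_elt_mem mult_pos unfolding w'_def W_def by simp_all
  then have S: "w \<in> S" "w' \<in> S" "W \<in> S" using assms(2) apery_subset by auto
  have "w + w' = W" and ord: "ord_sg w S + ord_sg w' S = ord_sg W S"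
    using assms(1) i unfolding supersymmetric_def w'_def W_def by auto
  moreover have "ord_sg W S * e = ord_sg w S * e + ord_sg w' S * e"
    using ord by (metis add_mult_distrib)
  ultimately have "ord_reduced w + ord_reduced w' = ord_reduced W"
    using ord_reduced_add[OF S(1)] ord_reduced_add[OF S(2)] ord_reduced_add[OF S(3)] by linarith
  then show ?thesis using \<open>w' \<in> Ap\<close> unfolding W_def by blast
qed

theorem supersymmetric_imp_symmetric_blowup:
  assumes "supersymmetric S"
  shows "symmetric_sg B"
proof -
  define m where "m r = ord_reduced (apery_rep r)" for r
  interpret complementary_apery B e "ord_reduced (apery_elt S (e - 1))" m
  proof
    show "0 < e" by (rule mult_pos)
    show "0 \<in> B" "\<And>x y. x \<in> B \<Longrightarrow> y \<in> B \<Longrightarrow> x + y \<in> B"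
      unfolding blowup_def by (auto intro: gen_monoid.intros)
    show "n \<in> B \<longleftrightarrow> m (n mod e) \<le> n" for n
      using mem_blowup_iff assms unfolding m_def supersymmetric_def by blast
    show "m r mod e = r" if "r < e" for r
      using apery_rep_mem[OF that] apery_rep_mod[OF that] apery_subset ord_reduced_mod
      unfolding m_def by (metis subsetD)
    show "\<exists>r'<e. m r + m r' = ord_reduced (apery_elt S (e - 1))" if r: "r < e" for r
    proof -
      obtain w' where "w' \<in> Ap" "m r + ord_reduced w' = ord_reduced (apery_elt S (e - 1))"
        using supersymmetric_ord_reduced_pairs[OF assms apery_rep_mem[OF r]] unfolding m_def by blast
      then show ?thesis using apery_rep_of_mod mult_pos unfolding m_def by (intro exI[of _ "w' mod e"]) auto
    qed
  qed
  show ?thesis by (rule symmetric)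
qed

end

theorem lemma4p11:
  assumes "numerical_semigroup S" and "supersymmetric S"
  shows "symmetric_sg (blowup S)"
  using num_semigroup.supersymmetric_imp_symmetric_blowup[OF num_semigroup.intro[OF assms(1)] assms(2)] .

end
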